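(* For any real $r \in [0,1]$, the sequence $\left(c_q^{1/(q+r)}\right)_{q \geq 2}$ is strictly decreasing.
   Context: For integers $q \geq 1$, $c_q := \sqrt{\lfloor (q+2)^2/4 \rfloor}$. *)

theory Defs
  imports Complex_Main
begin

definition c :: "nat \<Rightarrow> real" where
  "c q = sqrt (real (((q + 2)^2) div 4))"

end

theory Submission
  imports Defs
begin

text \<open>
  Here c q ^ 2 is (m + 1) ^ 2 for q = 2 m and (m + 1) (m + 2) for q = 2 m + 1. Comparing
  logarithms, and using c q \<le> c (q + 1) to absorb the shift r \<le> 1, the step from q to q + 1
  reduces to c (q + 1) ^ (q + 1) < c q ^ (q + 2). In both parities this is
  (m + 2) ^ (2 m + 1) < (m + 1) ^ (2 m + 3), i.e. (1 + 1 / (m + 1)) ^ (2 m + 1) < (m + 1) ^ 2,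
  which for m \<ge> 2 holds because the left side is below e ^ 2 < 9 (m = 1 is checked directly).
\<close>

lemma strict_antimono_on_atLeastI:
  fixes f :: "nat \<Rightarrow> 'a::order"
  assumes Suc_less: "\<And>n. k \<le> n \<Longrightarrow> f (Suc n) < f n"
  shows "strict_antimono_on {k..} f"
proof (rule monotone_onI)
  fix m n assume "m \<in> {k..}" "m < n"
  then have "k \<le> m" "Suc m \<le> n" by auto
  from \<open>Suc m \<le> n\<close> show "f n < f m"
  proof (induction n rule: dec_induct)
    case base
    show ?case using Suc_less \<open>k \<le> m\<close> .
  next
    case (step n)
    have "f (Suc n) < f n" using step.hyps(1) \<open>k \<le> m\<close> by (intro Suc_less) simp
    then show ?case using step.IH by (rule order.strict_trans)
  qed
qed

lemma one_plus_inverse_power_less_exp_2: "(1 + 1 / real (Suc m)) ^ (2*m + 1) < exp 2"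
proof -
  have "(1 + 1 / real (Suc m)) ^ (2*m + 1) \<le> exp (1 / real (Suc m)) ^ (2*m + 1)"
    by (intro power_mono) auto
  also have "\<dots> = exp (real (2*m + 1) / real (Suc m))"
    by (subst exp_of_nat_mult[symmetric]) simp
  also have "\<dots> < exp 2"
    by (simp add: field_simps)
  finally show ?thesis .
qed

lemma add2_power_less_add1_power:
  fixes m :: nat
  assumes "1 \<le> m"
  shows "(m + 2) ^ (2*m + 1) < (m + 1) ^ (2*m + 3)"
proof (cases "m = 1")
  case True
  then show ?thesis by (simp add: eval_nat_numeral)
next
  case False
  then have "2 \<le> m" using assms by simp
  have "exp (2::real) = exp 1 ^ 2" by (simp add: exp_of_nat_mult[symmetric])
  also have "\<dots> \<le> 3 ^ 2" by (intro power_mono exp_le) auto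
  also have "(3::real) ^ 2 \<le> real (m + 1) ^ 2" using \<open>2 \<le> m\<close> by (intro power_mono) auto
  finally have exp_2_le: "exp 2 \<le> real (m + 1) ^ 2" .
  have "real (m + 2) = real (m + 1) * (1 + 1 / real (Suc m))"
    by (simp add: field_simps)
  then have "real ((m + 2) ^ (2*m + 1)) = real (m + 1) ^ (2*m + 1) * (1 + 1 / real (Suc m)) ^ (2*m + 1)"
    by (simp only: of_nat_power power_mult_distrib)
  also have "\<dots> < real (m + 1) ^ (2*m + 1) * exp 2"
    using one_plus_inverse_power_less_exp_2 by simp
  also have "\<dots> \<le> real (m + 1) ^ (2*m + 1) * real (m + 1) ^ 2"
    using exp_2_le by simp
  also have "\<dots> = real ((m + 1) ^ (2*m + 3))"
    unfolding of_nat_power power_add[symmetric] by (simp add: numeral_3_eq_3 del: power_Suc)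
  finally show ?thesis by linarith
qed

definition c_sq :: "nat \<Rightarrow> nat" where
  "c_sq q = (q + 2)^2 div 4"

lemma c_eq_sqrt_c_sq: "c q = sqrt (real (c_sq q))"
  unfolding c_def c_sq_def ..

lemma c_sq_even: "c_sq (2*m) = (m + 1)^2"
proof -
  have "(2*m + 2)^2 = 4 * (m + 1)^2" by (simp add: power2_eq_square algebra_simps)
  then show ?thesis unfolding c_sq_def by simp
qed

lemma c_sq_odd: "c_sq (2*m + 1) = (m + 1) * (m + 2)"
proof -
  have "(2*m + 1 + 2)^2 = 1 + 4 * ((m + 1) * (m + 2))" by (simp add: power2_eq_square algebra_simps)
  then show ?thesis unfolding c_sq_def by simp
qed

lemma c_sq_pos: "0 < c_sq q"
proof -
  have "2^2 \<le> (q + 2)^2" by (intro power_mono) auto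
  then show ?thesis unfolding c_sq_def by simp
qed

lemma c_sq_le_Suc: "c_sq q \<le> c_sq (Suc q)"
  unfolding c_sq_def by (intro div_le_mono power_mono) auto

lemma c_sq_Suc_power_less:
  assumes "2 \<le> q"
  shows "c_sq (Suc q) ^ (q + 1) < c_sq q ^ (q + 2)"
proof (cases "even q")
  case True
  then obtain m where q: "q = 2*m" by auto
  then have "1 \<le> m" using assms by simp
  have idx: "Suc q = 2*m + 1" "q + 1 = 2*m + 1" "(2*m + 1) + (2*m + 3) = 2*(2*m + 2)"
    using q by simp_all
  have "c_sq (Suc q) ^ (q + 1) = (m + 1) ^ (2*m + 1) * (m + 2) ^ (2*m + 1)"
    by (simp only: idx c_sq_odd power_mult_distrib)
  also have "\<dots> < (m + 1) ^ (2*m + 1) * (m + 1) ^ (2*m + 3)"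
    using add2_power_less_add1_power[OF \<open>1 \<le> m\<close>] by simp
  also have "\<dots> = c_sq q ^ (q + 2)"
    by (simp only: q idx c_sq_even power_add[symmetric] power_mult[symmetric])
  finally show ?thesis .
next
  case False
  then obtain m where q: "q = 2*m + 1" using oddE by blast
  then have "1 \<le> m" using assms by simp
  have idx: "Suc q = 2*(m + 1)" "q + 1 = 2*m + 2" "m + 1 + 1 = m + 2"
    "2*(2*m + 2) = (2*m + 1) + (2*m + 3)" "2*m + 1 + 2 = 2*m + 3"
    using q by simp_all
  have "c_sq (Suc q) ^ (q + 1) = (m + 2) ^ (2*m + 1) * (m + 2) ^ (2*m + 3)"
    by (simp only: idx c_sq_even power_mult[symmetric] power_add[symmetric])
  also have "\<dots> < (m + 1) ^ (2*m + 3) * (m + 2) ^ (2*m + 3)"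
    using add2_power_less_add1_power[OF \<open>1 \<le> m\<close>] by simp
  also have "\<dots> = c_sq q ^ (q + 2)"
    by (simp only: q idx c_sq_odd power_mult_distrib)
  finally show ?thesis .
qed

lemma c_pos: "0 < c q"
  unfolding c_eq_sqrt_c_sq using c_sq_pos[of q] by simp

lemma c_le_Suc: "c q \<le> c (Suc q)"
  unfolding c_eq_sqrt_c_sq using c_sq_le_Suc[of q] by simp

lemma c_Suc_power_less:
  assumes "2 \<le> q"
  shows "c (Suc q) ^ (q + 1) < c q ^ (q + 2)"
  unfolding c_eq_sqrt_c_sq real_sqrt_power[symmetric] of_nat_power[symmetric]
    real_sqrt_less_iff of_nat_less_iff
  by (rule c_sq_Suc_power_less[OF assms])

lemma powr_inverse_shift_less:
  fixes x y r :: real and n :: nat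
  assumes "0 < x" "x \<le> y" "y ^ (n + 1) < x ^ (n + 2)"
    and "0 \<le> r" "r \<le> 1" "0 < real n + r"
  shows "y powr (1 / (real (Suc n) + r)) < x powr (1 / (real n + r))"
proof -
  have "0 < y" using assms by simp
  have "ln x \<le> ln y" using assms by simp
  have "ln (y ^ (n + 1)) < ln (x ^ (n + 2))"
    using assms \<open>0 < y\<close> by simp
  then have "real (n + 1) * ln y < real (n + 2) * ln x"
    using assms \<open>0 < y\<close> by (simp only: ln_realpow)
  moreover have "(1 - r) * ln x \<le> (1 - r) * ln y"
    using \<open>ln x \<le> ln y\<close> assms by (intro mult_left_mono) auto
  ultimately have "(real n + r) * ln y < (real (Suc n) + r) * ln x"
    by (simp add: algebra_simps)
  then have "ln y / (real (Suc n) + r) < ln x / (real n + r)"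
    using assms by (simp add: field_simps)
  then show ?thesis
    using assms \<open>0 < y\<close> by (simp add: powr_def)
qed

theorem lemma2p12:
  fixes r :: real
  assumes "0 \<le> r" and "r \<le> 1"
  shows "strict_antimono_on {2..} (\<lambda>q::nat. c q powr (1 / (real q + r)))"
proof (rule strict_antimono_on_atLeastI)
  fix q :: nat
  assume "2 \<le> q"
  then show "c (Suc q) powr (1 / (real (Suc q) + r)) < c q powr (1 / (real q + r))"
    using powr_inverse_shift_less[OF c_pos c_le_Suc c_Suc_power_less] assms by simp
qed

end
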